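(* For all integers $i\geq 1$, $j\in\{1,2\}$ and $1\leq k\leq i+j$, one has $b_{(i,j,k)}>0$.
   Context: Bernoulli numbers $B_n$ are defined by $\frac{t}{e^t-1}=\sum_{n\ge0}B_n\frac{t^n}{n!}$ (so $B_0=1$, $B_1=-1/2$, $B_2=1/6$). For integers $i\ge1$, $j\ge1$, $1\le k\le i+j$, rational numbers $b_{(i,j,k)}$ are defined recursively by $b_{(1,j,k)}=\frac{(-1)^{j+1-k}B_{j+1-k}}{(j+1-k)!}$ and, for $i\ge2$, $b_{(i,j,k)}=\sum_{m=0}^{\min\{j,\,i+j-k\}}\frac{(-1)^mB_m}{m!}\,b_{(i-1,j+1-m,k)}$. *)

theory Defs
  imports "HOL-Computational_Algebra.Formal_Power_Series"
begin

definition bernoulli :: "nat \<Rightarrow> rat" where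
  "bernoulli n = fact n * fps_nth (fps_X / (fps_exp 1 - 1)) n"

text \<open>The numbers b_(i,j,k), defined recursively on i (i \<ge> 1).
  Argument i is shifted: bcoef i j k corresponds to b_(i+1, j, k).\<close>
fun bcoef0 :: "nat \<Rightarrow> nat \<Rightarrow> nat \<Rightarrow> rat" where
  "bcoef0 0 j k = (-1) ^ (j + 1 - k) * bernoulli (j + 1 - k) / fact (j + 1 - k)"
| "bcoef0 (Suc i) j k =
     (\<Sum>m = 0..min j (Suc i + 1 + j - k).
        (-1) ^ m * bernoulli m / fact m * bcoef0 i (j + 1 - m) k)"

definition b :: "nat \<Rightarrow> nat \<Rightarrow> nat \<Rightarrow> rat" where
  "b i j k = bcoef0 (i - 1) j k"


end

theory Submission
  imports Defs "HOL-Combinatorics.Stirling"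
begin

text \<open>Let c_m = (-1)^m B_m / m! be the coefficients of x / (1 - e^-x) and let M be the matrix
  with entries M(h, k) = c_(h+1-k) (zero for k > h + 1), indices starting at 1. Once the
  truncation of the sums is removed, the recursion says that b_(i,j,-) is row j of M^i.
  Since 1 - e^-x is the compositional inverse of L = -ln(1 - x), the identity
  L^k = x ((x^(k-1) x / (1 - e^-x)) o L) shows that the rows r_n = ([x^n] L^h)_h satisfy
  r_(n+1) = r_n M. As r_1 = e_1 and r_2 = e_2 + e_1 / 2, rows 1 and 2 of M^i are r_(i+1) and
  r_(i+2) - r_(i+1) / 2. Finally [x^n] L^k = k!/n! s(n, k) with unsigned Stirling numbers of
  the first kind, whence b_(i,1,k) = k!/(i+1)! s(i+1, k) and
  b_(i,2,k) = k!/(i+2)! (i/2 s(i+1, k) + s(i+1, k-1)), both visibly positive.\<close>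

unbundle fps_syntax

definition fps_neg_ln_one_minus :: "'a::field_char_0 fps" where
  "fps_neg_ln_one_minus = - (fps_ln 1 oo - fps_X)"

text \<open>The case n = 0 is covered by the convention 1 / 0 = 0.\<close>

lemma fps_neg_ln_one_minus_nth: "fps_neg_ln_one_minus $ n = 1 / of_nat n"
  by (cases n) (simp_all add: fps_neg_ln_one_minus_def fps_compose_uminus' fps_ln_nth)

lemma fps_neg_ln_one_minus_nth_0 [simp]: "fps_neg_ln_one_minus $ 0 = 0"
  by (simp add: fps_neg_ln_one_minus_nth)

lemma fps_deriv_neg_ln_one_minus:
  "(1 - fps_X) * fps_deriv (fps_neg_ln_one_minus :: 'a::field_char_0 fps) = 1"
proof -
  have "fps_deriv (fps_neg_ln_one_minus :: 'a fps) = Abs_fps (\<lambda>n. 1)"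
    by (rule fps_ext) (simp add: fps_neg_ln_one_minus_nth del: of_nat_Suc)
  also have "\<dots> = inverse (1 - fps_X)"
    by (simp add: fps_inverse_one_minus_fps_X)
  finally show ?thesis
    by (simp add: inverse_mult_eq_1')
qed

lemma one_minus_fps_exp_neg_compose_fps_neg_ln_one_minus:
  "(1 - fps_exp (-1)) oo fps_neg_ln_one_minus = (fps_X :: 'a::field_char_0 fps)"
proof -
  have exp_ln: "(fps_exp 1 - 1) oo fps_ln 1 = (fps_X :: 'a fps)"
    using fps_inv_fps_exp_compose(2)[of "1::'a"] by (simp add: fps_ln_fps_exp_inv)
  have "1 - fps_exp (-1) = - ((fps_exp 1 - 1) oo (- fps_X :: 'a fps))"
    by (simp add: fps_compose_sub_distrib)
  then have "(1 - fps_exp (-1)) oo fps_neg_ln_one_minus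
      = - ((fps_exp 1 - 1) oo ((- fps_X) oo fps_neg_ln_one_minus) :: 'a fps)"
    by (simp add: fps_compose_uminus fps_compose_assoc[symmetric])
  also have "(- fps_X) oo fps_neg_ln_one_minus = (fps_ln 1 oo - fps_X :: 'a fps)"
    by (simp add: fps_neg_ln_one_minus_def fps_compose_uminus)
  also have "(fps_exp 1 - 1) oo (fps_ln 1 oo - fps_X) = (- fps_X :: 'a fps)"
    by (simp add: fps_compose_assoc exp_ln)
  finally show ?thesis by simp
qed

lemma fps_compose_inverse_power_nth:
  fixes f g h :: "'a::idom fps"
  assumes inv: "f oo g = fps_X" and g0: "g $ 0 = 0" and hf: "h * f = fps_X" and k: "1 \<le> k"
  shows "(g ^ k) $ Suc n
    = (\<Sum>i = 0..n. (g ^ i) $ n * (if k \<le> i + 1 then h $ (i + 1 - k) else 0))"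
proof -
  have "(h oo g) * fps_X = (h oo g) * (f oo g)"
    by (simp add: inv)
  also have "\<dots> = g"
    by (simp add: fps_compose_mult_distrib[OF g0, symmetric] hf fps_X_fps_compose_startby0[OF g0])
  finally have hg: "(h oo g) * fps_X = g" .
  obtain k' where k': "k = Suc k'"
    using k by (cases k) auto
  have "g ^ k = (h oo g) * fps_X * g ^ k'"
    by (simp add: hg k')
  also have "\<dots> = ((h * fps_X ^ k') oo g) * fps_X"
    by (simp add: fps_compose_mult_distrib[OF g0] fps_compose_power[OF g0, symmetric]
        fps_X_fps_compose_startby0[OF g0] mult_ac)
  finally have "(g ^ k) $ Suc n = ((h * fps_X ^ k') oo g) $ n"
    by simp
  also have "\<dots> = (\<Sum>i = 0..n. (g ^ i) $ n * (if k \<le> i + 1 then h $ (i + 1 - k) else 0))"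
    unfolding fps_compose_nth
    by (rule sum.cong) (auto simp: fps_X_power_mult_right_nth k' mult.commute)
  finally show ?thesis .
qed

definition bernoulli_plus :: "nat \<Rightarrow> rat" where
  "bernoulli_plus m = (-1) ^ m * bernoulli m"

lemma fps_bernoulli_plus_mult:
  "Abs_fps (\<lambda>m. bernoulli_plus m / fact m) * (1 - fps_exp (-1)) = fps_X"
proof -
  define G where "G = fps_X / (fps_exp 1 - (1 :: rat fps))"
  have "subdegree (fps_exp (1::rat) - 1) = 1"
    by (rule subdegreeI) auto
  then have "(fps_exp (1::rat) - 1) dvd fps_X"
    by (subst fps_dvd_iff) auto
  then have "G * (fps_exp 1 - 1) = fps_X"
    by (simp add: G_def)
  then have "(G oo - fps_X) * ((fps_exp 1 - 1) oo - fps_X) = - fps_X"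
    by (simp add: fps_compose_mult_distrib[symmetric])
  moreover have "G oo - fps_X = Abs_fps (\<lambda>m. bernoulli_plus m / fact m)"
    by (simp add: fps_compose_uminus' bernoulli_plus_def bernoulli_def G_def)
  ultimately show ?thesis
    by (simp add: fps_compose_sub_distrib algebra_simps)
qed

lemma fps_neg_ln_one_minus_power_nth_rec:
  fixes k n :: nat
  defines "L \<equiv> fps_neg_ln_one_minus :: 'a::field_char_0 fps"
  shows "of_nat (Suc n) * (L ^ Suc k) $ Suc n
    = of_nat n * (L ^ Suc k) $ n + of_nat (Suc k) * (L ^ k) $ n"
proof -
  have "(1 - fps_X) * fps_deriv (L ^ Suc k)
      = fps_const (of_nat (Suc k)) * L ^ k * ((1 - fps_X) * fps_deriv L)"
    by (simp only: fps_deriv_power diff_Suc_1 mult_ac)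
  also have "\<dots> = fps_const (of_nat (Suc k)) * L ^ k"
    by (simp add: L_def fps_deriv_neg_ln_one_minus)
  finally have "((1 - fps_X) * fps_deriv (L ^ Suc k)) $ n = of_nat (Suc k) * (L ^ k) $ n"
    by simp
  then show ?thesis
    by (cases n) (simp_all add: algebra_simps del: power_Suc fps_deriv_mult)
qed

lemma fps_neg_ln_one_minus_power_nth:
  "(fps_neg_ln_one_minus ^ k :: 'a::field_char_0 fps) $ n = fact k / fact n * of_nat (stirling n k)"
proof (induction n arbitrary: k)
  case 0
  then show ?case
    by (cases k) simp_all
next
  case (Suc n)
  show ?case
  proof (cases k)
    case 0
    then show ?thesis by simp
  next
    case (Suc k')
    have "of_nat (Suc n) * (fps_neg_ln_one_minus ^ k :: 'a fps) $ Suc n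
        = of_nat n * (fact k / fact n * of_nat (stirling n k))
          + of_nat k * (fact k' / fact n * of_nat (stirling n k'))"
      unfolding Suc fps_neg_ln_one_minus_power_nth_rec Suc.IH ..
    also have "\<dots> = fact k / fact n * of_nat (stirling (Suc n) k)"
      by (simp add: Suc field_simps)
    finally show ?thesis
      by (simp add: field_simps del: of_nat_Suc)
  qed
qed

lemma stirling_pos: "0 < k \<Longrightarrow> k \<le> n \<Longrightarrow> 0 < stirling n k"
proof (induction n arbitrary: k)
  case 0
  then show ?case by simp
next
  case (Suc n)
  then obtain k' where k': "k = Suc k'"
    by (cases k) auto
  show ?case
  proof (cases "k' = n")
    case False
    then have "0 < n * stirling n k"
      using Suc k' by simp
    then show ?thesis
      by (simp add: k')
  qed (simp add: k')
qed

definition bernoulli_matrix :: "nat \<Rightarrow> nat \<Rightarrow> rat" where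
  "bernoulli_matrix h k =
    (if k \<le> h + 1 then bernoulli_plus (h + 1 - k) / fact (h + 1 - k) else 0)"

lemma fps_neg_ln_one_minus_power_nth_Suc_matrix:
  assumes "1 \<le> k" and "1 \<le> n" and "n \<le> B"
  shows "(fps_neg_ln_one_minus ^ k :: rat fps) $ Suc n
    = (\<Sum>h = 1..B. (fps_neg_ln_one_minus ^ h) $ n * bernoulli_matrix h k)"
proof -
  have "(fps_neg_ln_one_minus ^ k :: rat fps) $ Suc n
      = (\<Sum>h = 0..n. (fps_neg_ln_one_minus ^ h) $ n * bernoulli_matrix h k)"
    unfolding fps_compose_inverse_power_nth[OF one_minus_fps_exp_neg_compose_fps_neg_ln_one_minus
        fps_neg_ln_one_minus_nth_0 fps_bernoulli_plus_mult \<open>1 \<le> k\<close>] fps_nth_Abs_fps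
    by (simp add: bernoulli_matrix_def)
  also have "\<dots> = (\<Sum>h = 1..n. (fps_neg_ln_one_minus ^ h) $ n * bernoulli_matrix h k)"
    using \<open>1 \<le> n\<close> by (simp add: sum.atLeast_Suc_atMost)
  also have "\<dots> = (\<Sum>h = 1..B. (fps_neg_ln_one_minus ^ h) $ n * bernoulli_matrix h k)"
    using \<open>n \<le> B\<close>
    by (intro sum.mono_neutral_left) (auto simp: fps_neg_ln_one_minus_power_nth)
  finally show ?thesis .
qed

fun bernoulli_matrix_power :: "nat \<Rightarrow> nat \<Rightarrow> nat \<Rightarrow> rat" where
  "bernoulli_matrix_power 0 j k = (if j = k then 1 else 0)"
| "bernoulli_matrix_power (Suc n) j k =
    (\<Sum>h = 1..j + 1. bernoulli_matrix j h * bernoulli_matrix_power n h k)"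

lemma bernoulli_matrix_power_eq_0: "n + j < k \<Longrightarrow> bernoulli_matrix_power n j k = 0"
  by (induction n arbitrary: j) auto

lemma bernoulli_matrix_power_1:
  assumes "1 \<le> k"
  shows "bernoulli_matrix_power 1 j k = bernoulli_matrix j k"
proof -
  have "bernoulli_matrix_power 1 j k
      = (\<Sum>h = 1..j + 1. if h = k then bernoulli_matrix j h else 0)"
    unfolding One_nat_def bernoulli_matrix_power.simps by (intro sum.cong) auto
  also have "\<dots> = bernoulli_matrix j k"
    using assms by (simp add: sum.delta' bernoulli_matrix_def)
  finally show ?thesis .
qed

lemma bernoulli_matrix_power_Suc_right:
  assumes "1 \<le> j" and "1 \<le> k" and "n + j \<le> B"
  shows "bernoulli_matrix_power (Suc n) j k
    = (\<Sum>h = 1..B. bernoulli_matrix_power n j h * bernoulli_matrix h k)"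
  using assms
proof (induction n arbitrary: j)
  case 0
  have "(\<Sum>h = 1..B. bernoulli_matrix_power 0 j h * bernoulli_matrix h k)
      = (\<Sum>h = 1..B. if h = j then bernoulli_matrix j k else 0)"
    by (intro sum.cong) auto
  also have "\<dots> = bernoulli_matrix j k"
    using 0 by (simp add: sum.delta')
  finally show ?case
    using bernoulli_matrix_power_1[OF \<open>1 \<le> k\<close>] by simp
next
  case (Suc n)
  have "bernoulli_matrix_power (Suc (Suc n)) j k
      = (\<Sum>h = 1..j + 1. bernoulli_matrix j h
          * (\<Sum>h' = 1..B. bernoulli_matrix_power n h h' * bernoulli_matrix h' k))"
    unfolding bernoulli_matrix_power.simps(2)[of "Suc n"]
    using Suc.prems by (intro sum.cong refl) (simp add: Suc.IH del: bernoulli_matrix_power.simps)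
  also have "\<dots> = (\<Sum>h = 1..j + 1. \<Sum>h' = 1..B.
      bernoulli_matrix j h * bernoulli_matrix_power n h h' * bernoulli_matrix h' k)"
    by (simp only: sum_distrib_left mult.assoc)
  also have "\<dots> = (\<Sum>h' = 1..B. \<Sum>h = 1..j + 1.
      bernoulli_matrix j h * bernoulli_matrix_power n h h' * bernoulli_matrix h' k)"
    by (rule sum.swap)
  also have "\<dots> = (\<Sum>h' = 1..B. bernoulli_matrix_power (Suc n) j h' * bernoulli_matrix h' k)"
    by (simp only: bernoulli_matrix_power.simps sum_distrib_right)
  finally show ?case .
qed

lemma bcoef0_eq_bernoulli_matrix_power:
  assumes "1 \<le> k" and "k \<le> i + 1 + j"
  shows "bcoef0 i j k = bernoulli_matrix_power (Suc i) j k"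
  using assms
proof (induction i arbitrary: j)
  case 0
  then show ?case
    using bernoulli_matrix_power_1[of k j]
    by (simp add: bernoulli_matrix_def bernoulli_plus_def del: bernoulli_matrix_power.simps)
next
  case (Suc i)
  have "bcoef0 (Suc i) j k = (\<Sum>m = 0..min j (i + 2 + j - k).
      bernoulli_plus m / fact m * bcoef0 i (j + 1 - m) k)"
    by (simp add: bernoulli_plus_def)
  also have "\<dots> = (\<Sum>m = 0..min j (i + 2 + j - k).
      bernoulli_plus m / fact m * bernoulli_matrix_power (Suc i) (j + 1 - m) k)"
  proof (intro sum.cong refl)
    fix m
    assume "m \<in> {0..min j (i + 2 + j - k)}"
    then have "bcoef0 i (j + 1 - m) k = bernoulli_matrix_power (Suc i) (j + 1 - m) k"
      using Suc.prems by (intro Suc.IH) auto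
    then show "bernoulli_plus m / fact m * bcoef0 i (j + 1 - m) k
        = bernoulli_plus m / fact m * bernoulli_matrix_power (Suc i) (j + 1 - m) k"
      by simp
  qed
  also have "\<dots> = (\<Sum>m = 0..j.
      bernoulli_plus m / fact m * bernoulli_matrix_power (Suc i) (j + 1 - m) k)"
    by (intro sum.mono_neutral_left)
      (auto simp: bernoulli_matrix_power_eq_0 simp del: bernoulli_matrix_power.simps)
  also have "\<dots> = (\<Sum>h = 1..j + 1. bernoulli_matrix j h * bernoulli_matrix_power (Suc i) h k)"
    by (rule sum.reindex_bij_witness[where i="\<lambda>h. j + 1 - h" and j="\<lambda>m. j + 1 - m"])
      (auto simp: bernoulli_matrix_def)
  finally show ?case
    by simp
qed

lemma b_eq_bernoulli_matrix_power:
  assumes "1 \<le> i" and "1 \<le> k" and "k \<le> i + j"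
  shows "b i j k = bernoulli_matrix_power i j k"
  using bcoef0_eq_bernoulli_matrix_power[of k "i - 1" j] assms by (simp add: b_def)

lemma bernoulli_matrix_power_row_1:
  "1 \<le> k \<Longrightarrow> bernoulli_matrix_power n 1 k = (fps_neg_ln_one_minus ^ k) $ Suc n"
proof (induction n arbitrary: k)
  case 0
  then show ?case
    unfolding fps_neg_ln_one_minus_power_nth by (cases k) auto
next
  case (Suc n)
  have "bernoulli_matrix_power (Suc n) 1 k
      = (\<Sum>h = 1..Suc n. bernoulli_matrix_power n 1 h * bernoulli_matrix h k)"
    using Suc.prems by (intro bernoulli_matrix_power_Suc_right) auto
  also have "\<dots> = (\<Sum>h = 1..Suc n. (fps_neg_ln_one_minus ^ h) $ Suc n * bernoulli_matrix h k)"
  proof (rule sum.cong[OF refl])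
    fix h :: nat
    assume "h \<in> {1..Suc n}"
    then show "bernoulli_matrix_power n 1 h * bernoulli_matrix h k
        = (fps_neg_ln_one_minus ^ h) $ Suc n * bernoulli_matrix h k"
      by (simp only: Suc.IH atLeastAtMost_iff)
  qed
  also have "\<dots> = (fps_neg_ln_one_minus ^ k) $ Suc (Suc n)"
    using Suc.prems by (intro fps_neg_ln_one_minus_power_nth_Suc_matrix[symmetric]) auto
  finally show ?case .
qed

lemma bernoulli_matrix_power_row_2:
  "1 \<le> k \<Longrightarrow> bernoulli_matrix_power n 2 k
    = (fps_neg_ln_one_minus ^ k) $ (n + 2) - (fps_neg_ln_one_minus ^ k) $ (n + 1) / 2"
proof (induction n arbitrary: k)
  case 0
  then consider "k = 1" | "k = 2" | "2 < k"
    by linarith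
  then show ?case
    unfolding fps_neg_ln_one_minus_power_nth by cases (auto simp: numeral_2_eq_2)
next
  case (Suc n)
  let ?L = "fps_neg_ln_one_minus :: rat fps"
  have "bernoulli_matrix_power (Suc n) 2 k
      = (\<Sum>h = 1..n + 2. bernoulli_matrix_power n 2 h * bernoulli_matrix h k)"
    using Suc.prems by (intro bernoulli_matrix_power_Suc_right) auto
  also have "\<dots> = (\<Sum>h = 1..n + 2.
      (?L ^ h) $ (n + 2) * bernoulli_matrix h k - (?L ^ h) $ (n + 1) * bernoulli_matrix h k / 2)"
  proof (rule sum.cong[OF refl])
    fix h :: nat
    assume "h \<in> {1..n + 2}"
    then show "bernoulli_matrix_power n 2 h * bernoulli_matrix h k
        = (?L ^ h) $ (n + 2) * bernoulli_matrix h k - (?L ^ h) $ (n + 1) * bernoulli_matrix h k / 2"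
      by (simp only: Suc.IH atLeastAtMost_iff) (simp add: algebra_simps)
  qed
  also have "\<dots> = (\<Sum>h = 1..n + 2. (?L ^ h) $ (n + 2) * bernoulli_matrix h k)
      - (\<Sum>h = 1..n + 2. (?L ^ h) $ (n + 1) * bernoulli_matrix h k) / 2"
    by (simp only: sum_subtractf sum_divide_distrib)
  also have "\<dots> = (?L ^ k) $ (Suc n + 2) - (?L ^ k) $ (Suc n + 1) / 2"
    using Suc.prems fps_neg_ln_one_minus_power_nth_Suc_matrix[of k "n + 2" "n + 2"]
      fps_neg_ln_one_minus_power_nth_Suc_matrix[of k "n + 1" "n + 2"] by (simp del: power_Suc)
  finally show ?case .
qed

lemma b_1_eq_stirling:
  assumes "1 \<le> i" and "1 \<le> k" and "k \<le> i + 1"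
  shows "b i 1 k = fact k / fact (i + 1) * of_nat (stirling (i + 1) k)"
proof -
  have "b i 1 k = bernoulli_matrix_power i 1 k"
    using assms by (intro b_eq_bernoulli_matrix_power)
  also have "\<dots> = (fps_neg_ln_one_minus ^ k) $ (i + 1)"
    using assms bernoulli_matrix_power_row_1 by simp
  finally show ?thesis
    by (simp only: fps_neg_ln_one_minus_power_nth)
qed

lemma b_2_eq_stirling:
  assumes "1 \<le> i" and "1 \<le> k" and "k \<le> i + 2"
  shows "b i 2 k = fact k / fact (i + 2)
    * (of_nat i / 2 * of_nat (stirling (i + 1) k) + of_nat (stirling (i + 1) (k - 1)))"
proof -
  have "b i 2 k = bernoulli_matrix_power i 2 k"
    using assms by (intro b_eq_bernoulli_matrix_power)
  also have "\<dots> = (fps_neg_ln_one_minus ^ k) $ (i + 2) - (fps_neg_ln_one_minus ^ k) $ (i + 1) / 2"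
    using assms by (intro bernoulli_matrix_power_row_2)
  also have "\<dots> = fact k / fact (i + 2)
      * (of_nat (stirling (i + 2) k) - of_nat (i + 2) / 2 * of_nat (stirling (i + 1) k))"
  proof -
    define F :: rat where "F = fact (i + 1)"
    define N :: rat where "N = of_nat (i + 2)"
    have "F \<noteq> 0" and "N \<noteq> 0" and fact_i2: "fact (i + 2) = N * F"
      by (simp_all add: F_def N_def)
    then show ?thesis
      unfolding fps_neg_ln_one_minus_power_nth fact_i2 F_def[symmetric] N_def[symmetric]
      by (simp add: field_simps)
  qed
  also have "stirling (i + 2) k = (i + 1) * stirling (i + 1) k + stirling (i + 1) (k - 1)"
    using assms by (cases k) simp_all
  finally show ?thesis
    by (simp add: field_simps)
qed

theorem theorem5p1:
  fixes i j k :: nat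
  assumes "i \<ge> 1" and "j \<in> {1, 2}" and "1 \<le> k" and "k \<le> i + j"
  shows "b i j k > 0"
proof (cases "j = 1")
  case True
  then show ?thesis
    using assms b_1_eq_stirling[of i k] stirling_pos[of k "i + 1"] by simp
next
  case False
  with assms have "j = 2"
    by auto
  have "(0::rat) < of_nat i / 2 * of_nat (stirling (i + 1) k) + of_nat (stirling (i + 1) (k - 1))"
  proof (cases "k \<le> i + 1")
    case True
    then show ?thesis
      using assms stirling_pos[of k "i + 1"] by (simp add: add_pos_nonneg)
  next
    case False
    then have "k - 1 = i + 1"
      using assms \<open>j = 2\<close> by simp
    then show ?thesis
      by (simp add: add_nonneg_pos)
  qed
  then show ?thesis
    using assms b_2_eq_stirling[of i k] \<open>j = 2\<close> by simp
qed

end
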